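(* Let $n\ge 1$ and $a=(a_0,\dots,a_n)\in\mathbb{R}^{n+1}$. Then the tropical entropy satisfies $H(a)\le 1-1/n$.
   Context: For an integer $s\ge 0$, let $D_s\subset\mathbb{R}^s$ be the set of vectors $z=(z_1,\dots,z_s)$ satisfying $a$, i.e. such that for every $k$ with $0\le k\le s-1-n$ the minimum $\min_{0\le i\le n}\{a_i+z_{k+1+i}\}$ is attained for at least two different indices $i$. $D_s$ is a polyhedral complex; let $d_s=\dim D_s$. The sequence $d_s$ is subadditive, and the tropical entropy of $a$ is $H(a)=\lim_{s\to\infty} d_s/s$. *)

theory Defs
  imports Complex_Main
begin

text \<open>Vectors z in R^s are represented as functions z :: nat => real with
  coordinates z 1, ..., z s and z i = 0 for all other i.\<close>

definition D_set :: "(nat \<Rightarrow> real) \<Rightarrow> nat \<Rightarrow> nat \<Rightarrow> (nat \<Rightarrow> real) set" where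
  "D_set a n s = {z. (\<forall>i. i \<notin> {1..s} \<longrightarrow> z i = 0) \<and>
     (\<forall>k. k + 1 + n \<le> s \<longrightarrow>
        (\<exists>i j. i \<le> n \<and> j \<le> n \<and> i \<noteq> j \<and>
           a i + z (k + 1 + i) = Min ((\<lambda>l. a l + z (k + 1 + l)) ` {0..n}) \<and>
           a j + z (k + 1 + j) = Min ((\<lambda>l. a l + z (k + 1 + l)) ` {0..n})))}"

definition aff_indep :: "nat \<Rightarrow> (nat \<Rightarrow> nat \<Rightarrow> real) \<Rightarrow> bool" where
  "aff_indep k p \<longleftrightarrow> (\<forall>c :: nat \<Rightarrow> real.
     (\<forall>i. (\<Sum>j\<in>{1..k}. c j * (p j i - p 0 i)) = 0) \<longrightarrow> (\<forall>j\<in>{1..k}. c j = 0))"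

definition hull_in :: "nat \<Rightarrow> (nat \<Rightarrow> nat \<Rightarrow> real) \<Rightarrow> (nat \<Rightarrow> real) set \<Rightarrow> bool" where
  "hull_in k p S \<longleftrightarrow> (\<forall>w :: nat \<Rightarrow> real. (\<forall>j\<le>k. 0 \<le> w j) \<and> (\<Sum>j\<le>k. w j) = 1 \<longrightarrow>
     (\<lambda>i. \<Sum>j\<le>k. w j * p j i) \<in> S)"

text \<open>Dimension of the polyhedral set S (a finite union of closed polyhedra):
  the largest k such that S contains a k-dimensional simplex.\<close>
definition poly_dim :: "(nat \<Rightarrow> real) set \<Rightarrow> nat" where
  "poly_dim S = Sup {k. \<exists>p. aff_indep k p \<and> hull_in k p S}"

definition d_seq :: "(nat \<Rightarrow> real) \<Rightarrow> nat \<Rightarrow> nat \<Rightarrow> nat" where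
  "d_seq a n s = poly_dim (D_set a n s)"

definition tropical_entropy :: "(nat \<Rightarrow> real) \<Rightarrow> nat \<Rightarrow> real" where
  "tropical_entropy a n = lim (\<lambda>s. real (d_seq a n s) / real s)"

end

theory Submission
  imports Defs "HOL-Library.Function_Algebras" "HOL-Computational_Algebra.Polynomial"
    "HOL-Real_Asymp.Real_Asymp"
begin

text \<open>
  The sequence \<open>d_s\<close> is subadditive (project a simplex in \<open>D_(s+t)\<close> onto the first \<open>s\<close> and
  the last \<open>t\<close> coordinates), so by Fekete's lemma \<open>H(a) = inf d_s / s\<close>, and it suffices to show
  \<open>d_s \<le> s - M\<close> for \<open>s = M n + 1\<close>. A \<open>k\<close>-simplex \<open>p_0, \<dots>, p_k\<close> in \<open>D_s\<close> contains the moment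
  curve \<open>y(t) = p_0 + \<Sum>j. t^j / k (p_j - p_0)\<close>, \<open>0 < t \<le> 1\<close>. In each of the \<open>M\<close> windows
  starting at \<open>m n + 1\<close> two coordinates \<open>u_m < e_m\<close> tie for the minimum; as there are only
  finitely many tie patterns, \<open>k + 1\<close> parameters \<open>t_0, \<dots>, t_k\<close> share one. The differences
  \<open>y(t_r) - y(t_0)\<close> are linearly independent (Vandermonde) and agree at \<open>u_m\<close> and \<open>e_m\<close>, so
  they remain independent after deleting the \<open>M\<close> distinct coordinates \<open>e_m\<close>: \<open>k \<le> s - M\<close>.
  Hence \<open>H(a) \<le> (M (n - 1) + 1) / (M n + 1)\<close> for every \<open>M\<close>.
\<close>

section \<open>Linear algebra in nat \<Rightarrow> real\<close>

text \<open>Functions \<open>nat \<Rightarrow> real\<close> carry no \<open>real_vector\<close> instance, so the vector space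
  structure is obtained by interpreting the locale with pointwise scaling.\<close>

definition scale_fun :: "real \<Rightarrow> (nat \<Rightarrow> real) \<Rightarrow> nat \<Rightarrow> real" where
  "scale_fun c x = (\<lambda>i. c * x i)"

interpretation fun_vs: vector_space scale_fun
  by unfold_locales (auto simp: scale_fun_def fun_eq_iff algebra_simps)

lemma sum_fun_apply: "(\<Sum>x\<in>A. (f x :: 'a \<Rightarrow> 'b :: comm_monoid_add)) i = (\<Sum>x\<in>A. f x i)"
  by (induction A rule: infinite_finite_induct) auto

definition lin_indep :: "nat \<Rightarrow> (nat \<Rightarrow> nat \<Rightarrow> real) \<Rightarrow> bool" where
  "lin_indep k v \<longleftrightarrow> (\<forall>c. (\<forall>i. (\<Sum>j\<in>{1..k}. c j * v j i) = 0) \<longrightarrow> (\<forall>j\<in>{1..k}. c j = 0))"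

lemma aff_indep_iff_lin_indep: "aff_indep k p \<longleftrightarrow> lin_indep k (\<lambda>j. p j - p 0)"
  unfolding aff_indep_def lin_indep_def by simp

lemma lin_indep_cong: "lin_indep k v \<Longrightarrow> (\<And>j. j \<in> {1..k} \<Longrightarrow> v j = v' j) \<Longrightarrow> lin_indep k v'"
  unfolding lin_indep_def by (metis (no_types, lifting) sum.cong)

lemma lin_indep_inj_on:
  assumes "lin_indep k v" shows "inj_on v {1..k}"
proof (rule inj_onI, rule ccontr)
  fix a b assume ab: "a \<in> {1..k}" "b \<in> {1..k}" "v a = v b" "a \<noteq> b"
  define c where "c = (\<lambda>j. if j = a then 1 else if j = b then -1 else 0 :: real)"
  have "(\<Sum>j\<in>{1..k}. c j * v j i) = 0" for i
  proof -
    have "(\<Sum>j\<in>{1..k}. c j * v j i) =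
        (\<Sum>j\<in>{1..k}. (if j = a then v a i else 0) - (if j = b then v b i else 0))"
      by (rule sum.cong) (auto simp: c_def ab)
    also have "\<dots> = v a i - v b i" using ab by (simp add: sum_subtractf)
    finally show ?thesis using ab by simp
  qed
  then have "c a = 0" using assms ab unfolding lin_indep_def by auto
  then show False by (simp add: c_def)
qed

lemma lin_indep_independent:
  assumes "lin_indep k v" shows "fun_vs.independent (v ` {1..k})"
proof (rule fun_vs.independent_if_scalars_zero)
  fix f x assume sum0: "(\<Sum>x\<in>v ` {1..k}. scale_fun (f x) x) = 0" and x: "x \<in> v ` {1..k}"
  have "(\<Sum>j\<in>{1..k}. f (v j) * v j i) = (\<Sum>x\<in>v ` {1..k}. scale_fun (f x) x) i" for i
    unfolding sum.reindex[OF lin_indep_inj_on[OF assms]] by (simp add: sum_fun_apply scale_fun_def)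
  then have "\<forall>j\<in>{1..k}. f (v j) = 0"
    using assms sum0 unfolding lin_indep_def by (elim allE[where x = "\<lambda>j. f (v j)"]) simp
  then show "f x = 0" using x by auto
qed simp

lemma lin_indep_if_bij_betw_independent:
  assumes "fun_vs.independent B" "bij_betw h {1..r} B"
  shows "lin_indep r h"
  unfolding lin_indep_def
proof (intro allI impI ballI)
  fix c :: "nat \<Rightarrow> real" and j
  assume c: "\<forall>i. (\<Sum>j\<in>{1..r}. c j * h j i) = 0" and j: "j \<in> {1..r}"
  have inj: "inj_on h {1..r}" and B: "B = h ` {1..r}" using assms(2) by (auto simp: bij_betw_def)
  define u where "u = (\<lambda>b. c (inv_into {1..r} h b))"
  have u_h: "u (h l) = c l" if "l \<in> {1..r}" for l
    by (simp only: u_def inv_into_f_f[OF inj that])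
  have "(\<Sum>b\<in>B. scale_fun (u b) b) i = (\<Sum>j\<in>{1..r}. c j * h j i)" for i
    unfolding B sum.reindex[OF inj] by (auto simp: sum_fun_apply scale_fun_def u_h intro!: sum.cong)
  then have "(\<Sum>b\<in>B. scale_fun (u b) b) = 0" using c by auto
  then have "u (h j) = 0" using fun_vs.independentD[OF assms(1)] j B by blast
  then show "c j = 0" using j by (simp add: u_h)
qed

lemma independent_subset_image_reindex:
  fixes V :: "nat \<Rightarrow> nat \<Rightarrow> real"
  assumes "fun_vs.independent B" "B \<subseteq> V ` {1..k}"
  obtains J where "inj_on J {1..card B}" "J ` {1..card B} \<subseteq> {1..k}" "lin_indep (card B) (V \<circ> J)"
proof -
  have "finite B" by (rule finite_subset[OF assms(2) finite_imageI]) simp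
  then obtain h where h: "bij_betw h {1..card B} B" using ex_bij_betw_nat_finite_1 by blast
  define J where "J = inv_into {1..k} V \<circ> h"
  have hV: "h i \<in> V ` {1..k}" if "i \<in> {1..card B}" for i
    using bij_betwE[OF h] that assms(2) by blast
  have VJ: "V (J i) = h i" if "i \<in> {1..card B}" for i
    using hV[OF that] by (simp add: J_def f_inv_into_f)
  have "inj_on J {1..card B}"
  proof (rule inj_onI)
    fix x y assume xy: "x \<in> {1..card B}" "y \<in> {1..card B}" "J x = J y"
    then have "h x = h y" using VJ by metis
    then show "x = y" using bij_betw_imp_inj_on[OF h] xy by (auto dest: inj_onD)
  qed
  moreover have "J ` {1..card B} \<subseteq> {1..k}"
    using hV inv_into_into[of _ V "{1..k}"] by (auto simp: J_def)
  moreover have "lin_indep (card B) (V \<circ> J)"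
    by (rule lin_indep_cong[OF lin_indep_if_bij_betw_independent[OF assms(1) h]]) (simp add: VJ)
  ultimately show ?thesis by (rule that)
qed

lemma lin_indep_card_le_span:
  assumes "lin_indep k v" "finite X" "v ` {1..k} \<subseteq> fun_vs.span X"
  shows "k \<le> card X"
  using fun_vs.independent_span_bound[OF assms(2) lin_indep_independent[OF assms(1)] assms(3)]
    card_image[OF lin_indep_inj_on[OF assms(1)]] by simp

lemma lin_indep_card_le:
  assumes "lin_indep k v" "finite F" "\<And>j i. j \<in> {1..k} \<Longrightarrow> i \<notin> F \<Longrightarrow> v j i = 0"
  shows "k \<le> card F"
proof -
  define \<delta> where "\<delta> = (\<lambda>c i :: nat. if i = c then 1 else 0 :: real)"
  have "v j \<in> fun_vs.span (\<delta> ` F)" if j: "j \<in> {1..k}" for j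
  proof -
    have "v j = (\<Sum>c\<in>F. scale_fun (v j c) (\<delta> c))"
    proof
      fix i
      have "(\<Sum>c\<in>F. scale_fun (v j c) (\<delta> c)) i = (\<Sum>c\<in>F. if c = i then v j i else 0)"
        by (auto simp: sum_fun_apply scale_fun_def \<delta>_def intro!: sum.cong)
      then show "v j i = (\<Sum>c\<in>F. scale_fun (v j c) (\<delta> c)) i"
        using assms(2) assms(3)[OF j, of i] by auto
    qed
    also have "\<dots> \<in> fun_vs.span (\<delta> ` F)"
      by (intro fun_vs.span_sum fun_vs.span_scale fun_vs.span_base) auto
    finally show ?thesis .
  qed
  then have "k \<le> card (\<delta> ` F)" using assms(1,2) by (intro lin_indep_card_le_span) auto
  also have "\<dots> \<le> card F" by (rule card_image_le[OF assms(2)])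
  finally show ?thesis .
qed

text \<open>The restrictions to \<open>A - e ` I\<close> stay independent: a combination vanishing there vanishes at
  every \<open>e m\<close> by strong induction on the coordinate, since \<open>u m < e m\<close>.\<close>

lemma lin_indep_card_le_ties:
  assumes indep: "lin_indep k w" and "finite A" "e ` I \<subseteq> A" "inj_on e I"
    and supp: "\<And>r i. r \<in> {1..k} \<Longrightarrow> i \<notin> A \<Longrightarrow> w r i = 0"
    and tie_below: "\<And>m. m \<in> I \<Longrightarrow> u m < e m"
    and tie: "\<And>r m. r \<in> {1..k} \<Longrightarrow> m \<in> I \<Longrightarrow> w r (e m) = w r (u m)"
  shows "k + card I \<le> card A"
proof -
  define F where "F = A - e ` I"
  define R where "R = (\<lambda>r i. if i \<in> F then w r i else 0)"
  have "lin_indep k R"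
    unfolding lin_indep_def
  proof (intro allI impI)
    fix c :: "nat \<Rightarrow> real" assume R0: "\<forall>i. (\<Sum>r\<in>{1..k}. c r * R r i) = 0"
    define z where "z = (\<lambda>i. \<Sum>r\<in>{1..k}. c r * w r i)"
    have "z i = 0" for i
    proof (induction i rule: less_induct)
      case (less i)
      consider "i \<in> F" | "i \<notin> A" | m where "m \<in> I" "i = e m"
        unfolding F_def by blast
      then show ?case
      proof cases
        case 1 then show ?thesis using R0[rule_format, of i] by (simp add: z_def R_def)
      next
        case 2 then show ?thesis by (simp add: z_def supp)
      next
        case 3
        then have "z i = z (u m)" by (simp add: z_def tie)
        then show ?thesis using less.IH[of "u m"] tie_below[OF 3(1)] 3(2) by simp
      qed
    qed
    then show "\<forall>r\<in>{1..k}. c r = 0" using indep unfolding lin_indep_def z_def by blast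
  qed
  then have "k \<le> card F"
    by (rule lin_indep_card_le) (auto simp: F_def R_def \<open>finite A\<close>)
  moreover have "finite (e ` I)" by (rule finite_subset[OF assms(3,2)])
  then have "card F = card A - card I"
    using card_Diff_subset[OF _ assms(3)] card_image[OF assms(4)] by (simp add: F_def)
  moreover have "card I \<le> card A"
    using card_mono[OF assms(2,3)] card_image[OF assms(4)] by simp
  ultimately show ?thesis by linarith
qed

section \<open>Simplices and coordinate maps\<close>

lemma hull_in_vertex:
  assumes "hull_in k p S" "j \<le> k" shows "p j \<in> S"
proof -
  define w where "w = (\<lambda>l. if l = j then 1 else 0 :: real)"
  have "(\<lambda>i. \<Sum>l\<le>k. w l * p l i) \<in> S"
    using assms unfolding hull_in_def w_def by auto
  moreover have "(\<Sum>l\<le>k. w l * p l i) = p j i" for i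
  proof -
    have "(\<Sum>l\<le>k. w l * p l i) = (\<Sum>l\<le>k. if l = j then p j i else 0)"
      by (rule sum.cong) (auto simp: w_def)
    then show ?thesis using assms(2) by simp
  qed
  ultimately show ?thesis by simp
qed

lemma hull_in_reindex:
  assumes "hull_in k p S" "inj_on J {..r}" "J ` {..r} \<subseteq> {..k}"
  shows "hull_in r (p \<circ> J) S"
  unfolding hull_in_def
proof (intro allI impI)
  fix w :: "nat \<Rightarrow> real" assume w: "(\<forall>j\<le>r. 0 \<le> w j) \<and> (\<Sum>j\<le>r. w j) = 1"
  define w' where "w' = (\<lambda>j. if j \<in> J ` {..r} then w (the_inv_into {..r} J j) else 0)"
  have w'J: "w' (J i) = w i" if "i \<le> r" for i
    using that assms(2) by (auto simp: w'_def the_inv_into_f_f)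
  have sum_w': "(\<Sum>j\<le>k. w' j * g j) = (\<Sum>i\<le>r. w i * g (J i))" for g :: "nat \<Rightarrow> real"
  proof -
    have "(\<Sum>j\<le>k. w' j * g j) = (\<Sum>j\<in>J ` {..r}. w' j * g j)"
      by (rule sum.mono_neutral_right) (use assms(3) in \<open>auto simp: w'_def\<close>)
    also have "\<dots> = (\<Sum>i\<le>r. w i * g (J i))"
      by (simp add: sum.reindex[OF assms(2)] w'J)
    finally show ?thesis .
  qed
  have "(\<forall>j\<le>k. 0 \<le> w' j) \<and> (\<Sum>j\<le>k. w' j) = 1"
    using w sum_w'[of "\<lambda>_. 1"] assms(2) by (auto simp: w'_def the_inv_into_f_f)
  then have "(\<lambda>i. \<Sum>j\<le>k. w' j * p j i) \<in> S" using assms(1) unfolding hull_in_def by blast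
  then show "(\<lambda>i. \<Sum>j\<le>r. w j * (p \<circ> J) j i) \<in> S" by (simp add: sum_w')
qed

definition coord_map :: "(nat \<Rightarrow> bool) \<Rightarrow> (nat \<Rightarrow> nat) \<Rightarrow> (nat \<Rightarrow> real) \<Rightarrow> nat \<Rightarrow> real" where
  "coord_map P f x = (\<lambda>i. if P i then x (f i) else 0)"

lemma coord_map_diff: "coord_map P f (x - y) = coord_map P f x - coord_map P f y"
  by (simp add: coord_map_def fun_eq_iff)

lemma coord_map_split:
  "coord_map (\<lambda>i. i \<le> s) id x +
    coord_map (\<lambda>i. s < i) (\<lambda>i. i - s) (coord_map (\<lambda>i. 1 \<le> i) (\<lambda>i. i + s) x) = x"
  by (auto simp: coord_map_def fun_eq_iff)

lemma hull_in_coord_map: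
  assumes "hull_in k p S" "\<And>z. z \<in> S \<Longrightarrow> coord_map P f z \<in> S'"
  shows "hull_in k (coord_map P f \<circ> p) S'"
  unfolding hull_in_def
proof (intro allI impI)
  fix w :: "nat \<Rightarrow> real" assume "(\<forall>j\<le>k. 0 \<le> w j) \<and> (\<Sum>j\<le>k. w j) = 1"
  then have "coord_map P f (\<lambda>i. \<Sum>j\<le>k. w j * p j i) \<in> S'"
    using assms unfolding hull_in_def by blast
  moreover have "coord_map P f (\<lambda>i. \<Sum>j\<le>k. w j * p j i) = (\<lambda>i. \<Sum>j\<le>k. w j * (coord_map P f \<circ> p) j i)"
    by (auto simp: coord_map_def fun_eq_iff)
  ultimately show "(\<lambda>i. \<Sum>j\<le>k. w j * (coord_map P f \<circ> p) j i) \<in> S'" by simp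
qed

lemma coord_map_span:
  assumes "x \<in> fun_vs.span X" shows "coord_map P f x \<in> fun_vs.span (coord_map P f ` X)"
  using assms
proof (induction rule: fun_vs.span_induct_alt)
  case base
  have "coord_map P f 0 = 0" by (simp add: coord_map_def fun_eq_iff)
  then show ?case by (metis fun_vs.span_zero)
next
  case (step c x y)
  have "coord_map P f (scale_fun c x + y) = scale_fun c (coord_map P f x) + coord_map P f y"
    by (simp add: coord_map_def scale_fun_def fun_eq_iff)
  then show ?case using step by (metis fun_vs.span_add fun_vs.span_scale fun_vs.span_base imageI)
qed

lemma simplex_from_independent_image:
  assumes hull: "hull_in k p S" and maps: "\<And>z. z \<in> S \<Longrightarrow> coord_map P f z \<in> S'"
    and "fun_vs.independent B"
    and "B \<subseteq> (\<lambda>j. coord_map P f (p j - p 0)) ` {1..k}"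
  shows "\<exists>q. aff_indep (card B) q \<and> hull_in (card B) q S'"
proof -
  obtain J where J: "inj_on J {1..card B}" "J ` {1..card B} \<subseteq> {1..k}"
    and indep: "lin_indep (card B) ((\<lambda>j. coord_map P f (p j - p 0)) \<circ> J)"
    using independent_subset_image_reindex[OF assms(3,4)] by blast
  define J0 where "J0 = (\<lambda>i. if i = 0 then 0 else J i)"
  have J_range: "J i \<in> {1..k}" if "i \<in> {1..card B}" for i using J(2) that by blast
  have "inj_on J0 {..card B}"
  proof (rule inj_onI)
    fix x y assume "x \<in> {..card B}" "y \<in> {..card B}" "J0 x = J0 y"
    then show "x = y"
      using J_range[of x] J_range[of y] inj_onD[OF J(1), of x y]
      by (auto simp: J0_def split: if_splits)
  qed
  moreover have "J0 ` {..card B} \<subseteq> {..k}" using J_range by (auto simp: J0_def)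
  ultimately have "hull_in (card B) (coord_map P f \<circ> p \<circ> J0) S'"
    using hull_in_reindex[OF hull_in_coord_map[OF hull maps]] by blast
  moreover have "aff_indep (card B) (coord_map P f \<circ> p \<circ> J0)"
    unfolding aff_indep_iff_lin_indep
    by (rule lin_indep_cong[OF indep]) (simp add: J0_def coord_map_diff)
  ultimately show ?thesis by blast
qed

definition min_twice :: "(nat \<Rightarrow> real) \<Rightarrow> nat \<Rightarrow> (nat \<Rightarrow> real) \<Rightarrow> bool" where
  "min_twice a n x \<longleftrightarrow> (\<exists>i j. i \<le> n \<and> j \<le> n \<and> i \<noteq> j \<and>
     a i + x i = Min ((\<lambda>l. a l + x l) ` {0..n}) \<and> a j + x j = Min ((\<lambda>l. a l + x l) ` {0..n}))"

lemma D_set_iff: "z \<in> D_set a n s \<longleftrightarrow>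
    (\<forall>i. i \<notin> {1..s} \<longrightarrow> z i = 0) \<and> (\<forall>k. k + 1 + n \<le> s \<longrightarrow> min_twice a n (\<lambda>l. z (k + 1 + l)))"
  unfolding D_set_def min_twice_def by blast

lemma min_twice_cong:
  assumes "min_twice a n x" "\<And>l. l \<le> n \<Longrightarrow> x' l = x l"
  shows "min_twice a n x'"
proof -
  have image: "(\<lambda>l. a l + x' l) ` {0..n} = (\<lambda>l. a l + x l) ` {0..n}"
    by (rule image_cong) (simp_all add: assms(2))
  obtain i j where "i \<le> n" "j \<le> n" "i \<noteq> j"
    "a i + x i = Min ((\<lambda>l. a l + x l) ` {0..n})" "a j + x j = Min ((\<lambda>l. a l + x l) ` {0..n})"
    using assms(1) unfolding min_twice_def by blast
  then show ?thesis
    unfolding min_twice_def image by (intro exI[of _ i] exI[of _ j]) (simp add: assms(2))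
qed

lemma min_twice_tie:
  assumes "min_twice a n x"
  obtains i j where "i < j" "j \<le> n" "a i + x i = a j + x j"
proof -
  obtain i j where "i \<le> n" "j \<le> n" "i \<noteq> j" "a i + x i = a j + x j"
    using assms unfolding min_twice_def by auto
  then show ?thesis using that[of i j] that[of j i] by (cases "i < j") auto
qed

lemma D_set_support: "z \<in> D_set a n s \<Longrightarrow> i \<notin> {1..s} \<Longrightarrow> z i = 0"
  by (simp add: D_set_iff)

lemma D_set_subset: "D_set a n s \<subseteq> {z. \<forall>i. i \<notin> {1..s} \<longrightarrow> z i = 0}"
  by (auto simp: D_set_iff)

lemma D_set_coord_prefix:
  assumes "z \<in> D_set a n (s + t)" shows "coord_map (\<lambda>i. i \<le> s) id z \<in> D_set a n s"
  unfolding D_set_iff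
proof (intro conjI allI impI)
  show "coord_map (\<lambda>i. i \<le> s) id z i = 0" if "i \<notin> {1..s}" for i
    using that D_set_support[OF assms, of 0] by (cases i) (auto simp: coord_map_def)
  fix k assume k: "k + 1 + n \<le> s"
  have "min_twice a n (\<lambda>l. z (k + 1 + l))" using assms k unfolding D_set_iff by auto
  then show "min_twice a n (\<lambda>l. coord_map (\<lambda>i. i \<le> s) id z (k + 1 + l))"
    by (rule min_twice_cong) (use k in \<open>simp add: coord_map_def\<close>)
qed

lemma D_set_coord_suffix:
  assumes "z \<in> D_set a n (s + t)" shows "coord_map (\<lambda>i. 1 \<le> i) (\<lambda>i. i + s) z \<in> D_set a n t"
  unfolding D_set_iff
proof (intro conjI allI impI)
  show "coord_map (\<lambda>i. 1 \<le> i) (\<lambda>i. i + s) z i = 0" if "i \<notin> {1..t}" for i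
    using that D_set_support[OF assms, of "i + s"] by (auto simp: coord_map_def)
  fix k assume k: "k + 1 + n \<le> t"
  have "min_twice a n (\<lambda>l. z (k + s + 1 + l))" using assms k unfolding D_set_iff by auto
  then show "min_twice a n (\<lambda>l. coord_map (\<lambda>i. 1 \<le> i) (\<lambda>i. i + s) z (k + 1 + l))"
    by (rule min_twice_cong) (simp add: coord_map_def ac_simps)
qed

definition simplex_dims :: "(nat \<Rightarrow> real) set \<Rightarrow> nat set" where
  "simplex_dims S = {k. \<exists>p. aff_indep k p \<and> hull_in k p S}"

context
  fixes S :: "(nat \<Rightarrow> real) set" and s :: nat
  assumes supp: "S \<subseteq> {z. \<forall>i. i \<notin> {1..s} \<longrightarrow> z i = 0}"
begin

lemma simplex_dims_le: "k \<in> simplex_dims S \<Longrightarrow> k \<le> s"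
proof -
  assume "k \<in> simplex_dims S"
  then obtain p where p: "aff_indep k p" "hull_in k p S" by (auto simp: simplex_dims_def)
  have zero: "p j i = 0" if "j \<le> k" "i \<notin> {1..s}" for j i
    using supp hull_in_vertex[OF p(2) that(1)] that(2) by blast
  have "k \<le> card {1..s}"
    by (rule lin_indep_card_le[OF p(1)[unfolded aff_indep_iff_lin_indep]]) (auto simp: zero)
  then show ?thesis by simp
qed

lemma finite_simplex_dims: "finite (simplex_dims S)"
  using simplex_dims_le by (meson finite_atMost finite_subset subsetI atMost_iff)

lemma poly_dim_eq_Max: "simplex_dims S \<noteq> {} \<Longrightarrow> poly_dim S = Max (simplex_dims S)"
  unfolding poly_dim_def simplex_dims_def[symmetric] by (rule cSup_eq_Max[OF finite_simplex_dims])

lemma poly_dim_ge: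
  assumes "aff_indep k p" "hull_in k p S" shows "k \<le> poly_dim S"
proof -
  have "k \<in> simplex_dims S" using assms by (auto simp: simplex_dims_def)
  then show ?thesis using poly_dim_eq_Max Max_ge[OF finite_simplex_dims] by (metis empty_iff)
qed

lemma obtain_max_simplex:
  obtains p where "aff_indep (poly_dim S) p" "hull_in (poly_dim S) p S" | "poly_dim S = 0"
proof (cases "simplex_dims S = {}")
  case True then show ?thesis using that by (simp add: poly_dim_def simplex_dims_def[symmetric])
next
  case False
  then have "poly_dim S \<in> simplex_dims S"
    using poly_dim_eq_Max Max_in[OF finite_simplex_dims] by simp
  then show ?thesis using that by (auto simp: simplex_dims_def)
qed

end

lemma d_seq_ge: "aff_indep k p \<Longrightarrow> hull_in k p (D_set a n s) \<Longrightarrow> k \<le> d_seq a n s"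
  unfolding d_seq_def by (rule poly_dim_ge[OF D_set_subset])

lemma d_seq_cases:
  obtains p where "aff_indep (d_seq a n s) p" "hull_in (d_seq a n s) p (D_set a n s)"
  | "d_seq a n s = 0"
  unfolding d_seq_def by (rule obtain_max_simplex[OF D_set_subset])

lemma d_seq_image_span:
  assumes "hull_in k p S" "\<And>z. z \<in> S \<Longrightarrow> coord_map P f z \<in> D_set a n s"
  obtains B where "finite B" "card B \<le> d_seq a n s"
    "(\<lambda>j. coord_map P f (p j - p 0)) ` {1..k} \<subseteq> fun_vs.span B"
proof -
  obtain B where B: "B \<subseteq> (\<lambda>j. coord_map P f (p j - p 0)) ` {1..k}" "fun_vs.independent B"
    "(\<lambda>j. coord_map P f (p j - p 0)) ` {1..k} \<subseteq> fun_vs.span B"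
    by (rule fun_vs.maximal_independent_subset)
  have "finite B" using finite_subset[OF B(1)] by simp
  moreover have "card B \<le> d_seq a n s"
    using simplex_from_independent_image[OF assms B(2,1)] d_seq_ge by blast
  ultimately show ?thesis using that B(3) by blast
qed

lemma d_seq_subadditive: "d_seq a n (s + t) \<le> d_seq a n s + d_seq a n t"
proof (cases rule: d_seq_cases[of a n "s + t"])
  case (1 p)
  define k where "k = d_seq a n (s + t)"
  have ind: "lin_indep k (\<lambda>j. p j - p 0)" and hull: "hull_in k p (D_set a n (s + t))"
    using 1 by (simp_all add: k_def aff_indep_iff_lin_indep)
  define L1 where "L1 = coord_map (\<lambda>i. i \<le> s) id"
  define L2 where "L2 = coord_map (\<lambda>i. 1 \<le> i) (\<lambda>i. i + s)"
  define U where "U = coord_map (\<lambda>i. s < i) (\<lambda>i. i - s)"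
  obtain B1 where B1: "finite B1" "card B1 \<le> d_seq a n s"
    "(\<lambda>j. L1 (p j - p 0)) ` {1..k} \<subseteq> fun_vs.span B1"
    unfolding L1_def by (rule d_seq_image_span[OF hull D_set_coord_prefix])
  obtain B2 where B2: "finite B2" "card B2 \<le> d_seq a n t"
    "(\<lambda>j. L2 (p j - p 0)) ` {1..k} \<subseteq> fun_vs.span B2"
    unfolding L2_def by (rule d_seq_image_span[OF hull D_set_coord_suffix])
  have "(\<lambda>j. p j - p 0) ` {1..k} \<subseteq> fun_vs.span (B1 \<union> U ` B2)"
  proof (rule image_subsetI)
    fix j assume j: "j \<in> {1..k}"
    have "L1 (p j - p 0) \<in> fun_vs.span (B1 \<union> U ` B2)"
      using B1(3) j fun_vs.span_mono[of B1 "B1 \<union> U ` B2"] by blast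
    moreover have "L2 (p j - p 0) \<in> fun_vs.span B2" using B2(3) j by blast
    then have "U (L2 (p j - p 0)) \<in> fun_vs.span (U ` B2)" unfolding U_def by (rule coord_map_span)
    then have "U (L2 (p j - p 0)) \<in> fun_vs.span (B1 \<union> U ` B2)"
      using fun_vs.span_mono[of "U ` B2" "B1 \<union> U ` B2"] by blast
    ultimately have "L1 (p j - p 0) + U (L2 (p j - p 0)) \<in> fun_vs.span (B1 \<union> U ` B2)"
      by (rule fun_vs.span_add)
    then show "p j - p 0 \<in> fun_vs.span (B1 \<union> U ` B2)"
      unfolding L1_def L2_def U_def coord_map_split .
  qed
  then have "k \<le> card (B1 \<union> U ` B2)"
    using B1(1) B2(1) by (intro lin_indep_card_le_span[OF ind]) auto
  also have "\<dots> \<le> card B1 + card B2"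
    using card_Un_le[of B1 "U ` B2"] card_image_le[OF B2(1), of U] by linarith
  finally show ?thesis using B1(2) B2(2) unfolding k_def by linarith
qed simp

section \<open>Fekete's lemma\<close>

lemma subadditive_le_mult_add:
  fixes u :: "nat \<Rightarrow> real"
  assumes sub: "\<And>s t. u (s + t) \<le> u s + u t"
  shows "u (q * m + r) \<le> real q * u m + u r"
proof (induction q)
  case (Suc q)
  have "u (Suc q * m + r) \<le> u m + u (q * m + r)"
    using sub[of m "q * m + r"] by (simp add: add.assoc)
  then show ?case using Suc by (simp add: algebra_simps)
qed simp

lemma subadditive_ratio_tendsto_Inf:
  fixes u :: "nat \<Rightarrow> real"
  assumes sub: "\<And>s t. u (s + t) \<le> u s + u t" and nonneg: "\<And>s. 0 \<le> u s"
  shows "(\<lambda>s. u s / real s) \<longlonglongrightarrow> Inf ((\<lambda>s. u s / real s) ` {1..})"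
proof (rule LIMSEQ_I)
  define L where "L = Inf ((\<lambda>s. u s / real s) ` {1..})"
  have bdd: "bdd_below ((\<lambda>s. u s / real s) ` {1..})"
    by (rule bdd_belowI[of _ 0]) (auto simp: nonneg)
  fix \<epsilon> :: real assume \<epsilon>: "0 < \<epsilon>"
  obtain m where m: "m \<ge> 1" "u m / real m < L + \<epsilon> / 2"
    using cInf_less_iff[OF _ bdd, of "L + \<epsilon> / 2"] \<epsilon> unfolding L_def by auto
  define C where "C = Max (u ` {..<m})"
  have C: "u r \<le> C" if "r < m" for r using that by (simp add: C_def)
  obtain N :: nat where N: "2 * C / \<epsilon> < real N" using reals_Archimedean2 by blast
  show "\<exists>N. \<forall>s\<ge>N. norm (u s / real s - L) < \<epsilon>"
  proof (intro exI allI impI)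
    fix s assume s: "N + 1 \<le> s"
    then have s_pos: "real s > 0" by simp
    have "L \<le> u s / real s" unfolding L_def by (rule cInf_lower[OF _ bdd]) (use s in auto)
    have "u s \<le> real (s div m) * u m + C"
      using subadditive_le_mult_add[OF sub, of "s div m" m "s mod m"] C[of "s mod m"] m(1) by simp
    also have "real (s div m) * u m = (real (s div m) * real m) * (u m / real m)" using m(1) by simp
    also have "\<dots> \<le> real s * (u m / real m)"
    proof (rule mult_right_mono)
      have "s div m * m \<le> s" by (rule div_times_less_eq_dividend)
      then show "real (s div m) * real m \<le> real s" by (metis of_nat_le_iff of_nat_mult)
    qed (simp add: nonneg)
    finally have "u s / real s \<le> u m / real m + C / real s"
      using s_pos by (simp add: field_simps)
    moreover have "C / real s < \<epsilon> / 2"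
    proof -
      have "2 * C / \<epsilon> < real s" using N s by linarith
      then show ?thesis using \<epsilon> s_pos by (simp add: field_simps)
    qed
    ultimately have "u s / real s - L < \<epsilon>" using m(2) by linarith
    then show "norm (u s / real s - L) < \<epsilon>" using \<open>L \<le> u s / real s\<close> by simp
  qed
qed

section \<open>Ties along a moment curve\<close>

lemma vandermonde_coeffs_zero:
  fixes ts :: "nat \<Rightarrow> real"
  assumes inj: "inj_on ts {..k}" and eq: "\<And>j. j \<le> k \<Longrightarrow> (\<Sum>r\<le>k. c r * ts r ^ j) = 0"
    and r0: "r0 \<le> k"
  shows "c r0 = 0"
proof -
  have poly_sum: "(\<Sum>r\<le>k. c r * poly Q (ts r)) = 0" if "degree Q \<le> k" for Q :: "real poly"
  proof -
    have "(\<Sum>r\<le>k. c r * poly Q (ts r)) = (\<Sum>j\<le>degree Q. coeff Q j * (\<Sum>r\<le>k. c r * ts r ^ j))"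
      by (simp add: poly_altdef sum_distrib_left algebra_simps sum.swap[where A = "{..k}"])
    then show ?thesis using eq that by simp
  qed
  \<comment> \<open>the Lagrange polynomial vanishing at all nodes except \<open>ts r0\<close>\<close>
  define P where "P = (\<Prod>r\<in>{..k} - {r0}. [:- ts r, 1:])"
  have "degree P \<le> k"
    unfolding P_def using degree_prod_sum_le[of "{..k} - {r0}" "\<lambda>r. [:- ts r, 1:]"] r0 by simp
  then have sum0: "(\<Sum>r\<le>k. c r * poly P (ts r)) = 0" by (rule poly_sum)
  have poly_P: "poly P x = (\<Prod>r\<in>{..k} - {r0}. x - ts r)" for x
    unfolding P_def by (simp add: poly_prod)
  have "(\<Sum>r\<le>k. c r * poly P (ts r)) =
      c r0 * poly P (ts r0) + (\<Sum>r\<in>{..k} - {r0}. c r * poly P (ts r))"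
    using r0 by (simp add: sum.remove)
  also have "(\<Sum>r\<in>{..k} - {r0}. c r * poly P (ts r)) = 0"
    by (rule sum.neutral) (auto simp: poly_P prod_zero_iff)
  moreover have "poly P (ts r0) \<noteq> 0"
    unfolding poly_P using inj r0 by (auto simp: prod_zero_iff inj_on_def)
  ultimately show ?thesis using sum0 by simp
qed

definition moment_point :: "nat \<Rightarrow> (nat \<Rightarrow> nat \<Rightarrow> real) \<Rightarrow> real \<Rightarrow> nat \<Rightarrow> real" where
  "moment_point k p t = (\<lambda>i. p 0 i + (\<Sum>j\<in>{1..k}. t ^ j / real k * (p j i - p 0 i)))"

lemma moment_point_in_hull:
  assumes "k \<ge> 1" "hull_in k p S" "0 < t" "t \<le> 1"
  shows "moment_point k p t \<in> S"
proof -
  define w where "w = (\<lambda>j. if j = 0 then 1 - (\<Sum>l\<in>{1..k}. t ^ l / real k) else t ^ j / real k)"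
  have split0: "(\<Sum>j\<le>k. g j) = g 0 + (\<Sum>j\<in>{1..k}. g j)" for g :: "nat \<Rightarrow> real"
    by (simp add: atMost_atLeast0 sum.atLeast_Suc_atMost)
  have "(\<Sum>l\<in>{1..k}. t ^ l / real k) \<le> (\<Sum>l\<in>{1..k}. 1 / real k)"
    by (intro sum_mono divide_right_mono) (use assms in \<open>auto intro: power_le_one\<close>)
  then have "\<forall>j\<le>k. 0 \<le> w j" using assms by (auto simp: w_def)
  moreover have "(\<Sum>j\<le>k. w j) = 1" by (simp add: split0 w_def)
  moreover have "(\<lambda>i. \<Sum>j\<le>k. w j * p j i) = moment_point k p t"
    by (simp add: fun_eq_iff split0 w_def moment_point_def algebra_simps sum_distrib_left
        sum_distrib_right sum_subtractf)
  ultimately show ?thesis using assms(2) unfolding hull_in_def by metis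
qed

lemma moment_point_diff:
  "moment_point k p t i - moment_point k p t' i =
    (\<Sum>j\<in>{1..k}. (t ^ j - t' ^ j) / real k * (p j i - p 0 i))"
  unfolding moment_point_def
  by (simp add: sum_subtractf[symmetric] diff_divide_distrib left_diff_distrib)

lemma moment_diffs_lin_indep:
  assumes "aff_indep k p" "inj_on ts {..k}"
  shows "lin_indep k (\<lambda>r. moment_point k p (ts r) - moment_point k p (ts 0))"
  unfolding lin_indep_def
proof (intro allI impI ballI)
  fix c :: "nat \<Rightarrow> real" and r0
  assume H: "\<forall>i. (\<Sum>r\<in>{1..k}. c r * (moment_point k p (ts r) - moment_point k p (ts 0)) i) = 0"
    and r0: "r0 \<in> {1..k}"
  define C where "C = (\<lambda>j. \<Sum>r\<in>{1..k}. c r * ((ts r ^ j - ts 0 ^ j) / real k))"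
  have "(\<Sum>j\<in>{1..k}. C j * (p j i - p 0 i)) = 0" for i
  proof -
    have "(\<Sum>r\<in>{1..k}. c r * (moment_point k p (ts r) - moment_point k p (ts 0)) i) =
        (\<Sum>r\<in>{1..k}. \<Sum>j\<in>{1..k}. c r * ((ts r ^ j - ts 0 ^ j) / real k * (p j i - p 0 i)))"
      by (simp add: moment_point_diff sum_distrib_left)
    also have "\<dots> = (\<Sum>j\<in>{1..k}. \<Sum>r\<in>{1..k}. c r * ((ts r ^ j - ts 0 ^ j) / real k * (p j i - p 0 i)))"
      by (rule sum.swap)
    also have "\<dots> = (\<Sum>j\<in>{1..k}. C j * (p j i - p 0 i))"
      by (simp add: C_def sum_distrib_right mult.assoc)
    finally show ?thesis using H by simp
  qed
  then have C0: "\<forall>j\<in>{1..k}. C j = 0" using assms(1) unfolding aff_indep_def by blast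
  define c' where "c' = (\<lambda>r. if r = 0 then - (\<Sum>r'\<in>{1..k}. c r') else c r)"
  have "(\<Sum>r\<le>k. c' r * ts r ^ j) = 0" if j: "j \<le> k" for j
  proof -
    have "(\<Sum>r\<le>k. c' r * ts r ^ j) = c' 0 * ts 0 ^ j + (\<Sum>r\<in>{1..k}. c r * ts r ^ j)"
      by (simp add: atMost_atLeast0 sum.atLeast_Suc_atMost c'_def)
    also have "\<dots> = (\<Sum>r\<in>{1..k}. c r * (ts r ^ j - ts 0 ^ j))"
      by (simp add: c'_def sum_distrib_right right_diff_distrib sum_subtractf)
    also have "\<dots> = real k * C j"
      by (simp add: C_def sum_distrib_left)
    also have "\<dots> = 0" using C0 j by (cases "j = 0") (auto simp: C_def)
    finally show ?thesis .
  qed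
  then have "c' r0 = 0" using vandermonde_coeffs_zero[OF assms(2)] r0 by auto
  then show "c r0 = 0" using r0 by (simp add: c'_def)
qed

definition ties :: "(nat \<Rightarrow> real) \<Rightarrow> nat \<Rightarrow> nat \<Rightarrow> (nat \<Rightarrow> real) \<Rightarrow> (nat \<times> nat \<times> nat) set" where
  "ties a n M y = {(m, i, j). m < M \<and> i < j \<and> j \<le> n \<and>
     a i + y (m * n + 1 + i) = a j + y (m * n + 1 + j)}"

lemma ties_subset: "ties a n M y \<subseteq> {..<M} \<times> {..n} \<times> {..n}"
  by (auto simp: ties_def)

lemma D_set_tie_coords:
  assumes "y0 \<in> D_set a n (M * n + 1)"
  obtains u e where "inj_on e {..<M}" "e ` {..<M} \<subseteq> {1..M * n + 1}" "\<And>m. m < M \<Longrightarrow> u m < e m"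
    "\<And>y m. ties a n M y = ties a n M y0 \<Longrightarrow> m < M \<Longrightarrow> y (e m) - y (u m) = y0 (e m) - y0 (u m)"
proof -
  have "\<exists>i j. (m, i, j) \<in> ties a n M y0" if "m < M" for m
  proof -
    have "(m + 1) * n \<le> M * n" using that by (intro mult_le_mono1) simp
    then have "m * n + 1 + n \<le> M * n + 1" by simp
    then have "min_twice a n (\<lambda>l. y0 (m * n + 1 + l))" using assms unfolding D_set_iff by blast
    then obtain i j where "i < j" "j \<le> n" "a i + y0 (m * n + 1 + i) = a j + y0 (m * n + 1 + j)"
      by (rule min_twice_tie)
    then show ?thesis using that by (auto simp: ties_def)
  qed
  then obtain i j where ij: "\<And>m. m < M \<Longrightarrow> (m, i m, j m) \<in> ties a n M y0" by metis
  define u where "u = (\<lambda>m. m * n + 1 + i m)"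
  define e where "e = (\<lambda>m. m * n + 1 + j m)"
  have window: "i m < j m" "j m \<le> n" if "m < M" for m using ij[OF that] by (auto simp: ties_def)
  have "strict_mono_on {..<M} e"
  proof (rule strict_mono_onI)
    fix m m' :: nat assume "m < m'"
    then have "(m + 1) * n \<le> m' * n" by (intro mult_le_mono1) simp
    then show "e m < e m'" if "m \<in> {..<M}" "m' \<in> {..<M}"
      using window that by (fastforce simp: e_def)
  qed
  then have "inj_on e {..<M}" by (rule strict_mono_on_imp_inj_on)
  moreover have "e ` {..<M} \<subseteq> {1..M * n + 1}"
  proof
    fix x assume "x \<in> e ` {..<M}"
    then obtain m where m: "m < M" "x = e m" by auto
    have "(m + 1) * n \<le> M * n" using m by (intro mult_le_mono1) simp
    then show "x \<in> {1..M * n + 1}" using window[OF m(1)] m by (simp add: e_def)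
  qed
  moreover have "u m < e m" if "m < M" for m using window[OF that] by (simp add: u_def e_def)
  moreover have "y (e m) - y (u m) = y0 (e m) - y0 (u m)"
    if "ties a n M y = ties a n M y0" "m < M" for y m
  proof -
    have "(m, i m, j m) \<in> ties a n M y" using ij[OF that(2)] that(1) by simp
    then show ?thesis using ij[OF that(2)] by (simp add: ties_def u_def e_def)
  qed
  ultimately show ?thesis using that by blast
qed

lemma obtain_inj_constant_on:
  assumes "infinite T" "finite (f ` T)"
  obtains ts :: "nat \<Rightarrow> 'a" and c where "inj_on ts {..k}" "ts ` {..k} \<subseteq> T" "\<And>r. r \<le> k \<Longrightarrow> f (ts r) = c"
proof -
  obtain t0 where "t0 \<in> T" "infinite {t \<in> T. f t = f t0}"
    using pigeonhole_infinite[OF assms] by blast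
  then obtain B where B: "finite B" "card B = Suc k" "B \<subseteq> {t \<in> T. f t = f t0}"
    using infinite_arbitrarily_large by blast
  then obtain ts where "bij_betw ts {0..<Suc k} B" using ex_bij_betw_nat_finite[OF B(1)] by auto
  then have "bij_betw ts {..k} B" by (simp add: atLeast0LessThan lessThan_Suc_atMost)
  then show ?thesis using that B(3) by (auto simp: bij_betw_def)
qed

lemma simplex_in_D_set_window_bound:
  assumes "1 \<le> k" "aff_indep k p" "hull_in k p (D_set a n (M * n + 1))"
  shows "k + M \<le> M * n + 1"
proof -
  define y where "y = moment_point k p"
  have yD: "y t \<in> D_set a n (M * n + 1)" if "t \<in> {0<..1}" for t
    using moment_point_in_hull[OF assms(1,3)] that by (auto simp: y_def)
  have "(\<lambda>t. ties a n M (y t)) ` {0<..1} \<subseteq> Pow ({..<M} \<times> {..n} \<times> {..n})"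
    using ties_subset by blast
  then have fin: "finite ((\<lambda>t. ties a n M (y t)) ` {0<..1})" by (rule finite_subset) simp
  have inf: "infinite {0<..1::real}" by simp
  obtain ts \<sigma> where ts: "inj_on ts {..k}" "ts ` {..k} \<subseteq> {0<..1}"
    and \<sigma>: "\<And>r. r \<le> k \<Longrightarrow> ties a n M (y (ts r)) = \<sigma>"
    by (rule obtain_inj_constant_on[OF inf fin, where k = k]) blast
  have ts_in: "ts r \<in> {0<..1}" if "r \<le> k" for r using ts(2) that by blast
  have "y (ts 0) \<in> D_set a n (M * n + 1)" using yD ts_in by blast
  then obtain u e where e: "inj_on e {..<M}" "e ` {..<M} \<subseteq> {1..M * n + 1}" "\<And>m. m < M \<Longrightarrow> u m < e m"
    and tie: "\<And>y' m. ties a n M y' = ties a n M (y (ts 0)) \<Longrightarrow> m < M \<Longrightarrow>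
      y' (e m) - y' (u m) = y (ts 0) (e m) - y (ts 0) (u m)"
    by (rule D_set_tie_coords) blast
  define w where "w = (\<lambda>r. y (ts r) - y (ts 0))"
  have "k + card {..<M} \<le> card {1..M * n + 1}"
  proof (rule lin_indep_card_le_ties[where e = e and u = u])
    show "lin_indep k w" unfolding w_def y_def by (rule moment_diffs_lin_indep[OF assms(2) ts(1)])
    show "w r i = 0" if "r \<in> {1..k}" "i \<notin> {1..M * n + 1}" for r i
      using D_set_support[OF yD[OF ts_in], of r i] D_set_support[OF yD[OF ts_in], of 0 i] that
      by (simp add: w_def)
    show "w r (e m) = w r (u m)" if "r \<in> {1..k}" "m \<in> {..<M}" for r m
      using tie[of "y (ts r)" m] \<sigma>[of r] \<sigma>[of 0] that by (simp add: w_def)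
  qed (use e in auto)
  then show ?thesis by simp
qed

lemma d_seq_window_bound:
  assumes "1 \<le> n"
  shows "d_seq a n (M * n + 1) + M \<le> M * n + 1"
proof -
  have M_le: "M \<le> M * n + 1" using mult_le_mono2[OF assms, of M] by linarith
  show ?thesis
  proof (cases rule: d_seq_cases[of a n "M * n + 1"])
    case (1 p)
    then show ?thesis
      using simplex_in_D_set_window_bound[of "d_seq a n (M * n + 1)" p] M_le
      by (cases "d_seq a n (M * n + 1) = 0") auto
  qed (use M_le in simp)
qed

theorem proposition3:
  fixes a :: "nat \<Rightarrow> real" and n :: nat
  assumes "n \<ge> 1"
  shows "tropical_entropy a n \<le> 1 - 1 / real n"
proof -
  define L where "L = Inf ((\<lambda>s. real (d_seq a n s) / real s) ` {1..})"
  have "(\<lambda>s. real (d_seq a n s) / real s) \<longlonglongrightarrow> L"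
    unfolding L_def using d_seq_subadditive
    by (intro subadditive_ratio_tendsto_Inf) (simp_all add: of_nat_add[symmetric] del: of_nat_add)
  then have entropy: "tropical_entropy a n = L"
    unfolding tropical_entropy_def by (rule limI)
  have bound: "L \<le> (real M * n + 1 - M) / (real M * n + 1)" for M
  proof -
    have "L \<le> real (d_seq a n (M * n + 1)) / real (M * n + 1)"
      unfolding L_def by (rule cInf_lower, intro imageI) (auto intro: bdd_belowI[of _ 0])
    also have "\<dots> \<le> (real M * n + 1 - M) / real (M * n + 1)"
    proof (rule divide_right_mono)
      have "real (d_seq a n (M * n + 1) + M) \<le> real (M * n + 1)"
        using d_seq_window_bound[OF assms] by (rule of_nat_mono)
      then show "real (d_seq a n (M * n + 1)) \<le> real M * n + 1 - M" by simp
    qed simp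
    finally show ?thesis by (simp only: of_nat_add of_nat_mult of_nat_1)
  qed
  have "(\<lambda>M. (real M * n + 1 - M) / (real M * n + 1)) \<longlonglongrightarrow> 1 - 1 / real n"
    using assms by (real_asymp simp add: field_simps)
  then show ?thesis
    unfolding entropy using bound by (intro LIMSEQ_le_const) auto
qed

end
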